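(* Let $G\le\mathrm{Aut}(T)$ be a weakly branch group. Then the minimal compact $G$-spaces on which the $G$-action is faithful and micro-supported are exactly the highly proximal extensions of $\partial T$.
   Context: $T$ is a locally finite rooted tree, $\mathrm{Aut}(T)$ its root-fixing automorphisms, $\partial T$ its boundary (a compact $G$-space). $G$ is weakly branch if $T$ is infinite and spherically homogeneous, $G$ is transitive on each level, and for every vertex $v$ the subgroup of elements acting trivially outside the subtree below $v$ is non-trivial. An action of $G$ on a compact space $X$ is micro-supported if for every non-empty open $U\subset X$ the rigid stabilizer $\mathrm{Rist}_G(U)$ (elements fixing $X\setminus U$ pointwise) is non-trivial. A continuous surjective $G$-equivariant map $\pi:Y\to Z$ between compact $G$-spaces is a highly proximal extension if for every non-empty open $U\subseteq Y$ there exists $z\in Z$ with $\pi^{-1}(z)\subseteq U$; $Y$ is then a highly proximal extension of $Z$. *)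

theory Defs
  imports "HOL-Analysis.Analysis"
begin

text \<open>Spherically homogeneous locally finite rooted tree with branching sequence d:
  level n vertices have d n children.  Vertices are lists v with v!i < d i;
  the root is the empty list and the parent of v is butlast v.\<close>

definition tree_vertices :: "(nat \<Rightarrow> nat) \<Rightarrow> nat list set" where
  "tree_vertices d = {v. \<forall>i<length v. v ! i < d i}"

definition tree_level :: "(nat \<Rightarrow> nat) \<Rightarrow> nat \<Rightarrow> nat list set" where
  "tree_level d n = {v \<in> tree_vertices d. length v = n}"

definition tree_aut :: "(nat \<Rightarrow> nat) \<Rightarrow> (nat list \<Rightarrow> nat list) set" where
  "tree_aut d = {g. bij_betw g (tree_vertices d) (tree_vertices d)
                    \<and> (\<forall>v\<in>tree_vertices d. length (g v) = length v \<and> g (butlast v) = butlast (g v))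
                    \<and> (\<forall>v. v \<notin> tree_vertices d \<longrightarrow> g v = v)}"

definition subgroup_of_aut :: "(nat \<Rightarrow> nat) \<Rightarrow> (nat list \<Rightarrow> nat list) set \<Rightarrow> bool" where
  "subgroup_of_aut d G \<longleftrightarrow> G \<subseteq> tree_aut d \<and> id \<in> G
     \<and> (\<forall>g\<in>G. \<forall>h\<in>G. g \<circ> h \<in> G) \<and> (\<forall>g\<in>G. inv g \<in> G)"

text \<open>Boundary: infinite rays, i.e. sequences \<xi> with \<xi> i < d i, with the product of
  discrete topologies (the usual topology of \<partial>T).\<close>

definition boundary :: "(nat \<Rightarrow> nat) \<Rightarrow> (nat \<Rightarrow> nat) topology" where
  "boundary d = product_topology (\<lambda>i. discrete_topology {..<d i}) UNIV"

definition bdry_act :: "(nat list \<Rightarrow> nat list) \<Rightarrow> (nat \<Rightarrow> nat) \<Rightarrow> (nat \<Rightarrow> nat)" where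
  "bdry_act g \<xi> = (\<lambda>n. g (map \<xi> [0..<Suc n]) ! n)"

definition rist_vertex :: "(nat \<Rightarrow> nat) \<Rightarrow> (nat list \<Rightarrow> nat list) set \<Rightarrow> nat list
    \<Rightarrow> (nat list \<Rightarrow> nat list) set" where
  "rist_vertex d G v = {g \<in> G. \<forall>w\<in>tree_vertices d. take (length v) w \<noteq> v \<longrightarrow> g w = w}"

definition weakly_branch :: "(nat \<Rightarrow> nat) \<Rightarrow> (nat list \<Rightarrow> nat list) set \<Rightarrow> bool" where
  "weakly_branch d G \<longleftrightarrow> subgroup_of_aut d G
     \<and> (\<forall>n. d n \<ge> 1)
     \<and> (\<forall>n. \<forall>u\<in>tree_level d n. \<forall>v\<in>tree_level d n. \<exists>g\<in>G. g u = v)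
     \<and> (\<forall>v\<in>tree_vertices d. rist_vertex d G v \<noteq> {id})"

definition G_space :: "('g \<Rightarrow> 'g \<Rightarrow> 'g) \<Rightarrow> 'g \<Rightarrow> 'g set \<Rightarrow> 'a topology \<Rightarrow> ('g \<Rightarrow> 'a \<Rightarrow> 'a) \<Rightarrow> bool" where
  "G_space gmul e G X act \<longleftrightarrow>
     (\<forall>g\<in>G. continuous_map X X (act g))
     \<and> (\<forall>x\<in>topspace X. act e x = x)
     \<and> (\<forall>g\<in>G. \<forall>h\<in>G. \<forall>x\<in>topspace X. act (gmul g h) x = act g (act h x))"

definition minimal_action :: "'g set \<Rightarrow> 'a topology \<Rightarrow> ('g \<Rightarrow> 'a \<Rightarrow> 'a) \<Rightarrow> bool" where
  "minimal_action G X act \<longleftrightarrow> topspace X \<noteq> {} \<and>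
     (\<forall>Y. closedin X Y \<and> Y \<noteq> {} \<and> (\<forall>g\<in>G. act g ` Y \<subseteq> Y) \<longrightarrow> Y = topspace X)"

definition faithful_action :: "'g \<Rightarrow> 'g set \<Rightarrow> 'a topology \<Rightarrow> ('g \<Rightarrow> 'a \<Rightarrow> 'a) \<Rightarrow> bool" where
  "faithful_action e G X act \<longleftrightarrow> (\<forall>g\<in>G. (\<forall>x\<in>topspace X. act g x = x) \<longrightarrow> g = e)"

definition rist :: "'g set \<Rightarrow> 'a topology \<Rightarrow> ('g \<Rightarrow> 'a \<Rightarrow> 'a) \<Rightarrow> 'a set \<Rightarrow> 'g set" where
  "rist G X act U = {g \<in> G. \<forall>x\<in>topspace X - U. act g x = x}"

definition micro_supported :: "'g \<Rightarrow> 'g set \<Rightarrow> 'a topology \<Rightarrow> ('g \<Rightarrow> 'a \<Rightarrow> 'a) \<Rightarrow> bool" where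
  "micro_supported e G X act \<longleftrightarrow>
     (\<forall>U. openin X U \<and> U \<noteq> {} \<longrightarrow> rist G X act U \<noteq> {e})"

definition highly_proximal_ext :: "'g set \<Rightarrow> 'a topology \<Rightarrow> ('g \<Rightarrow> 'a \<Rightarrow> 'a)
    \<Rightarrow> 'b topology \<Rightarrow> ('g \<Rightarrow> 'b \<Rightarrow> 'b) \<Rightarrow> ('a \<Rightarrow> 'b) \<Rightarrow> bool" where
  "highly_proximal_ext G Y actY Z actZ \<pi> \<longleftrightarrow>
     continuous_map Y Z \<pi> \<and> \<pi> ` topspace Y = topspace Z
     \<and> (\<forall>g\<in>G. \<forall>y\<in>topspace Y. \<pi> (actY g y) = actZ g (\<pi> y))
     \<and> (\<forall>U. openin Y U \<and> U \<noteq> {} \<longrightarrow> (\<exists>z\<in>topspace Z. {y \<in> topspace Y. \<pi> y = z} \<subseteq> U))"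

end

theory Submission
  imports Defs "HOL-Library.Sublist"
begin

(* For a vertex v let S v be the set of points moved by the rigid stabiliser of v. If the action is
   faithful and micro-supported, rigid stabilisers of non-empty open sets are infinite, and a
   commutator argument shows that S v and S w are disjoint for distinct vertices v, w of one level;
   by minimality the sets S v of each level cover the space, so they are clopen. Mapping x to the
   ray of all v with x \<in> S v gives a continuous equivariant map to the boundary; it is onto by
   compactness, and highly proximal because a non-trivial element supported in an open set U moves
   some vertex u, which forces S u \<subseteq> U.

   Conversely, a highly proximal extension inherits minimality and faithfulness from the boundary,
   and micro-support from the rigid stabilisers of vertices, which fix the clopen complement of a
   cylinder: an element fixing an open set of the base pointwise fixes its preimage pointwise. *)

lemma prefix_iff_take: "prefix v w \<longleftrightarrow> take (length v) w = v"
  unfolding prefix_def by (metis append_eq_conv_conj)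

lemma inj_on_fixing_outside_maps_into:
  assumes "inj_on f S" "f ` S \<subseteq> S" "\<And>x. x \<in> S - A \<Longrightarrow> f x = x" "x \<in> S" "x \<in> A"
  shows "f x \<in> A"
proof (rule ccontr)
  assume "f x \<notin> A"
  then have "f (f x) = f x" using assms(2,3,4) by blast
  then have "f x = x" using inj_onD[OF assms(1)] assms(2,4) by blast
  with \<open>f x \<notin> A\<close> assms(5) show False by simp
qed

lemma comp_commute_if_disjoint_supports:
  assumes "inj f" "inj g" "A \<inter> B = {}"
    and "\<And>x. x \<notin> A \<Longrightarrow> f x = x" "\<And>x. x \<notin> B \<Longrightarrow> g x = x"
  shows "f \<circ> g = g \<circ> f"
proof
  have f_A: "f x \<in> A" if "x \<in> A" for x
    using inj_on_fixing_outside_maps_into[of f UNIV A x] assms(1,4) that by blast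
  have g_B: "g x \<in> B" if "x \<in> B" for x
    using inj_on_fixing_outside_maps_into[of g UNIV B x] assms(2,5) that by blast
  fix x
  show "(f \<circ> g) x = (g \<circ> f) x"
  proof (cases "x \<in> A")
    case True
    then have "x \<notin> B" "f x \<notin> B" using f_A assms(3) by blast+
    then show ?thesis using assms(5) by simp
  next
    case False
    then have "f x = x" "x \<in> B \<Longrightarrow> g x \<notin> A" using g_B assms(3,4) by blast+
    then show ?thesis using assms(4,5) by (cases "x \<in> B") simp_all
  qed
qed

locale bij_group =
  fixes G :: "('b \<Rightarrow> 'b) set"
  assumes id_in_G: "id \<in> G"
    and comp_in_G: "g \<in> G \<Longrightarrow> h \<in> G \<Longrightarrow> g \<circ> h \<in> G"
    and inv_in_G: "g \<in> G \<Longrightarrow> inv g \<in> G"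
    and bij_G: "g \<in> G \<Longrightarrow> bij g"
begin

lemma inv_apply_left [simp]: "g \<in> G \<Longrightarrow> inv g (g x) = x"
  using bij_G bij_is_inj inv_f_f by metis

lemma inv_apply_right [simp]: "g \<in> G \<Longrightarrow> g (inv g x) = x"
  using bij_G bij_is_surj surj_f_inv_f by metis

lemma inv_inv_G [simp]: "g \<in> G \<Longrightarrow> inv (inv g) = g"
  using bij_G inv_inv_eq by blast

lemma inv_comp_left [simp]: "g \<in> G \<Longrightarrow> inv g \<circ> g = id"
  by auto

lemma inv_comp_right [simp]: "g \<in> G \<Longrightarrow> g \<circ> inv g = id"
  by auto

end

section \<open>Tree automorphisms and rigid stabilisers of vertices\<close>

lemma tree_vertices_take: "u \<in> tree_vertices d \<Longrightarrow> take m u \<in> tree_vertices d"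
  by (auto simp: tree_vertices_def)

lemma finite_tree_level: "finite (tree_level d n)"
proof (rule finite_subset)
  show "tree_level d n \<subseteq> {xs. set xs \<subseteq> {..<(\<Sum>i<n. d i)} \<and> length xs = n}"
  proof (clarsimp simp: tree_level_def tree_vertices_def)
    fix xs x assume xs: "\<forall>i<length xs. xs ! i < d i" and "x \<in> set xs"
    then obtain i where "i < length xs" "x = xs ! i" by (auto simp: in_set_conv_nth)
    then have "x < d i" "d i \<le> (\<Sum>i<length xs. d i)" using xs by (auto intro: member_le_sum)
    then show "x < (\<Sum>i<length xs. d i)" by linarith
  qed
  show "finite {xs. set xs \<subseteq> {..<(\<Sum>i<n. d i)} \<and> length xs = n}"
    by (rule finite_lists_length_eq) simp
qed

lemma tree_autD:
  assumes "g \<in> tree_aut d"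
  shows tree_aut_bij_betw: "bij_betw g (tree_vertices d) (tree_vertices d)"
    and tree_aut_length: "v \<in> tree_vertices d \<Longrightarrow> length (g v) = length v"
    and tree_aut_butlast: "v \<in> tree_vertices d \<Longrightarrow> g (butlast v) = butlast (g v)"
    and tree_aut_outside: "v \<notin> tree_vertices d \<Longrightarrow> g v = v"
  using assms unfolding tree_aut_def by auto

lemma tree_aut_in_vertices: "g \<in> tree_aut d \<Longrightarrow> v \<in> tree_vertices d \<Longrightarrow> g v \<in> tree_vertices d"
  using tree_aut_bij_betw bij_betwE by blast

lemma tree_aut_bij: "g \<in> tree_aut d \<Longrightarrow> bij g"
proof -
  assume g: "g \<in> tree_aut d"
  have "bij_betw g (- tree_vertices d) (- tree_vertices d)"
    using bij_betw_cong[of "- tree_vertices d" g id] tree_aut_outside[OF g] by simp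
  from bij_betw_disjoint_Un[OF tree_aut_bij_betw[OF g] this] show "bij g" by simp
qed

lemma tree_aut_level: "g \<in> tree_aut d \<Longrightarrow> u \<in> tree_level d n \<Longrightarrow> g u \<in> tree_level d n"
  by (simp add: tree_level_def tree_aut_in_vertices tree_aut_length)

lemma tree_aut_take:
  assumes g: "g \<in> tree_aut d" and u: "u \<in> tree_vertices d"
  shows "take m (g u) = g (take m u)"
  using u
proof (induction u arbitrary: m rule: rev_induct)
  case Nil
  then show ?case using tree_aut_length[OF g Nil] by simp
next
  case (snoc a u)
  have u: "u \<in> tree_vertices d" using tree_vertices_take[OF snoc.prems, of "length u"] by simp
  have "butlast (g (u @ [a])) = g u" "length (g (u @ [a])) = Suc (length u)"
    using tree_aut_butlast[OF g snoc.prems] tree_aut_length[OF g snoc.prems] by simp_all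
  then obtain c where c: "g (u @ [a]) = g u @ [c]"
    by (metis append_butlast_last_id list.size(3) nat.simps(3))
  show ?case
  proof (cases "m \<le> length u")
    case True
    then show ?thesis using snoc.IH[OF u, of m] tree_aut_length[OF g u] by (simp add: c)
  next
    case False
    then show ?thesis using tree_aut_length[OF g snoc.prems] by simp
  qed
qed

lemma tree_aut_prefix_iff:
  assumes g: "g \<in> tree_aut d" and "v \<in> tree_vertices d" "w \<in> tree_vertices d"
  shows "prefix (g v) (g w) \<longleftrightarrow> prefix v w"
proof -
  have "prefix (g v) (g w) \<longleftrightarrow> g (take (length v) w) = g v"
    using assms by (simp add: prefix_iff_take tree_aut_length tree_aut_take)
  also have "\<dots> \<longleftrightarrow> prefix v w"
    using bij_is_inj[OF tree_aut_bij[OF g]] by (simp add: prefix_iff_take inj_eq)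
  finally show ?thesis .
qed

lemma tree_aut_eq_idI:
  assumes "g \<in> tree_aut d" "\<And>u. u \<in> tree_vertices d \<Longrightarrow> g u = u"
  shows "g = id"
  using assms tree_aut_outside by fastforce

locale tree_aut_group =
  fixes d :: "nat \<Rightarrow> nat" and G :: "(nat list \<Rightarrow> nat list) set"
  assumes subgroup_of_aut: "subgroup_of_aut d G"
begin

lemma tree_aut_G: "g \<in> G \<Longrightarrow> g \<in> tree_aut d"
  using subgroup_of_aut unfolding subgroup_of_aut_def by blast

sublocale bij_group G
  using subgroup_of_aut tree_aut_bij unfolding subgroup_of_aut_def by unfold_locales blast+

lemma G_maps_level: "g \<in> G \<Longrightarrow> u \<in> tree_level d n \<Longrightarrow> g u \<in> tree_level d n"
  using tree_aut_level tree_aut_G by blast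

lemma rist_vertex_iff: "r \<in> rist_vertex d G v \<longleftrightarrow> r \<in> G \<and> (\<forall>w. \<not> prefix v w \<longrightarrow> r w = w)"
proof
  assume r: "r \<in> rist_vertex d G v"
  then have "r \<in> G" by (simp add: rist_vertex_def)
  moreover have "r w = w" if "\<not> prefix v w" for w
    using r tree_aut_outside[OF tree_aut_G[OF \<open>r \<in> G\<close>], of w] that
    unfolding rist_vertex_def prefix_iff_take by (cases "w \<in> tree_vertices d") auto
  ultimately show "r \<in> G \<and> (\<forall>w. \<not> prefix v w \<longrightarrow> r w = w)" by blast
qed (simp add: rist_vertex_def prefix_iff_take)

lemma rist_vertex_in_G: "r \<in> rist_vertex d G v \<Longrightarrow> r \<in> G"
  by (simp add: rist_vertex_iff)

lemma rist_vertex_fixes: "r \<in> rist_vertex d G v \<Longrightarrow> \<not> prefix v w \<Longrightarrow> r w = w"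
  by (simp add: rist_vertex_iff)

lemma rist_vertex_comp:
  "r \<in> rist_vertex d G v \<Longrightarrow> s \<in> rist_vertex d G v \<Longrightarrow> r \<circ> s \<in> rist_vertex d G v"
  by (simp add: rist_vertex_iff comp_in_G)

lemma rist_vertex_inv:
  assumes r: "r \<in> rist_vertex d G v"
  shows "inv r \<in> rist_vertex d G v"
proof -
  have "inv r w = w" if "\<not> prefix v w" for w
    using inv_apply_left[OF rist_vertex_in_G[OF r], of w] rist_vertex_fixes[OF r that] by simp
  then show ?thesis using r inv_in_G by (simp add: rist_vertex_iff)
qed

lemma rist_vertex_mono: "prefix v u \<Longrightarrow> rist_vertex d G u \<subseteq> rist_vertex d G v"
  by (meson prefix_order.trans rist_vertex_iff subsetI)

lemma rist_vertex_conj: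
  assumes g: "g \<in> G" and r: "r \<in> rist_vertex d G v" and v: "v \<in> tree_vertices d"
  shows "g \<circ> r \<circ> inv g \<in> rist_vertex d G (g v)"
proof -
  have "g (r (inv g w)) = w" if "\<not> prefix (g v) w" for w
  proof (cases "w \<in> tree_vertices d")
    case True
    then have "inv g w \<in> tree_vertices d"
      using tree_aut_in_vertices tree_aut_G inv_in_G g by blast
    then have "\<not> prefix v (inv g w)"
      using that tree_aut_prefix_iff[OF tree_aut_G[OF g] v \<open>inv g w \<in> tree_vertices d\<close>] g by simp
    then show ?thesis using rist_vertex_fixes[OF r] g by simp
  next
    case False
    have outside_fixed: "h w = w" if "h \<in> G" for h
      using tree_aut_outside[OF tree_aut_G[OF that] False] .
    show ?thesis
      using outside_fixed[OF g] outside_fixed[OF inv_in_G[OF g]] outside_fixed[OF rist_vertex_in_G[OF r]]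
      by simp
  qed
  then show ?thesis
    using g r inv_in_G comp_in_G by (simp add: rist_vertex_iff)
qed

lemma rist_vertex_commutator:
  assumes r: "r \<in> rist_vertex d G v" and v: "v \<in> tree_vertices d" and a: "a \<in> G" "a v = v"
  shows "r \<circ> inv a \<circ> inv r \<circ> a \<in> rist_vertex d G v"
proof -
  have "inv a v = v" using inv_apply_left[OF a(1), of v] a(2) by simp
  then have "inv a \<circ> inv r \<circ> a \<in> rist_vertex d G v"
    using rist_vertex_conj[OF inv_in_G[OF a(1)] rist_vertex_inv[OF r] v] a(1) by simp
  from rist_vertex_comp[OF r this] show ?thesis by (simp add: comp_assoc)
qed

lemma rist_vertex_commute:
  assumes "length v = length w" "v \<noteq> w" "r \<in> rist_vertex d G v" "s \<in> rist_vertex d G w"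
  shows "r \<circ> s = s \<circ> r"
proof (rule comp_commute_if_disjoint_supports)
  show "inj r" "inj s" using assms(3,4) rist_vertex_in_G bij_G bij_is_inj by blast+
  have "v = w" if "prefix v u" "prefix w u" for u
    using prefix_length_prefix[OF that] prefix_length_prefix[OF that(2,1)] assms(1)
    by (simp add: prefix_order.antisym)
  then show "{u. prefix v u} \<inter> {u. prefix w u} = {}" using assms(2) by blast
  show "r x = x" if "x \<notin> {u. prefix v u}" for x using rist_vertex_fixes[OF assms(3)] that by simp
  show "s x = x" if "x \<notin> {u. prefix w u}" for x using rist_vertex_fixes[OF assms(4)] that by simp
qed

end

locale weakly_branch_group =
  fixes d :: "nat \<Rightarrow> nat" and G :: "(nat list \<Rightarrow> nat list) set"
  assumes weakly_branch: "weakly_branch d G"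
begin

sublocale tree_aut_group
  using weakly_branch unfolding weakly_branch_def by unfold_locales blast

lemma branching_pos: "0 < d n"
proof -
  have "1 \<le> d n" using weakly_branch unfolding weakly_branch_def by blast
  then show ?thesis by simp
qed

lemma level_transitive: "u \<in> tree_level d n \<Longrightarrow> v \<in> tree_level d n \<Longrightarrow> \<exists>g\<in>G. g u = v"
  using weakly_branch unfolding weakly_branch_def by blast

lemma rist_vertex_nontrivial:
  assumes "v \<in> tree_vertices d"
  shows "\<exists>r\<in>rist_vertex d G v. r \<noteq> id"
proof -
  have "rist_vertex d G v \<noteq> {id}" using weakly_branch assms unfolding weakly_branch_def by blast
  moreover have "id \<in> rist_vertex d G v" by (simp add: rist_vertex_iff id_in_G)
  ultimately show ?thesis by blast
qed

end

section \<open>The boundary of the tree\<close>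

definition ray_prefix :: "(nat \<Rightarrow> nat) \<Rightarrow> nat \<Rightarrow> nat list" where
  "ray_prefix \<xi> n = map \<xi> [0..<n]"

definition cylinder :: "(nat \<Rightarrow> nat) \<Rightarrow> nat list \<Rightarrow> (nat \<Rightarrow> nat) set" where
  "cylinder d v = {\<xi> \<in> topspace (boundary d). ray_prefix \<xi> (length v) = v}"

definition ray_through :: "nat list \<Rightarrow> nat \<Rightarrow> nat" where
  "ray_through v i = (if i < length v then v ! i else 0)"

lemma topspace_boundary: "topspace (boundary d) = {\<xi>. \<forall>i. \<xi> i < d i}"
  unfolding boundary_def by (auto simp: PiE_def Pi_def)

lemma length_ray_prefix [simp]: "length (ray_prefix \<xi> n) = n"
  by (simp add: ray_prefix_def)

lemma nth_ray_prefix [simp]: "i < n \<Longrightarrow> ray_prefix \<xi> n ! i = \<xi> i"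
  by (simp add: ray_prefix_def)

lemma take_ray_prefix [simp]: "take m (ray_prefix \<xi> n) = ray_prefix \<xi> (min m n)"
  by (simp add: ray_prefix_def take_map min_def)

lemma ray_prefix_in_tree_level:
  "\<xi> \<in> topspace (boundary d) \<Longrightarrow> ray_prefix \<xi> n \<in> tree_level d n"
  by (simp add: tree_level_def tree_vertices_def topspace_boundary)

lemma ray_eqI: "(\<And>n. ray_prefix \<xi> n = ray_prefix \<eta> n) \<Longrightarrow> \<xi> = \<eta>"
  by (metis lessI nth_ray_prefix ext)

lemma ray_prefix_eq_iff: "ray_prefix \<xi> n = ray_prefix \<eta> n \<longleftrightarrow> (\<forall>i<n. \<xi> i = \<eta> i)"
  by (auto simp: ray_prefix_def)

lemma ray_prefix_ray_through [simp]: "ray_prefix (ray_through v) (length v) = v"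
  by (rule nth_equalityI) (simp_all add: ray_through_def)

lemma ray_through_in_boundary:
  "v \<in> tree_vertices d \<Longrightarrow> (\<And>n. 0 < d n) \<Longrightarrow> ray_through v \<in> topspace (boundary d)"
  by (simp add: topspace_boundary tree_vertices_def ray_through_def)

lemma ray_prefix_bdry_act:
  assumes g: "g \<in> tree_aut d" and \<xi>: "\<xi> \<in> topspace (boundary d)"
  shows "ray_prefix (bdry_act g \<xi>) n = g (ray_prefix \<xi> n)"
proof (rule nth_equalityI)
  show "length (ray_prefix (bdry_act g \<xi>) n) = length (g (ray_prefix \<xi> n))"
    using tree_aut_length[OF g] ray_prefix_in_tree_level[OF \<xi>] by (simp add: tree_level_def)
next
  fix i assume "i < length (ray_prefix (bdry_act g \<xi>) n)"
  then have i: "i < n" by simp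
  have "g (ray_prefix \<xi> (Suc i)) = take (Suc i) (g (ray_prefix \<xi> n))"
    using tree_aut_take[OF g, of "ray_prefix \<xi> n" "Suc i"] ray_prefix_in_tree_level[OF \<xi>] i
    by (simp add: tree_level_def min_def)
  then show "ray_prefix (bdry_act g \<xi>) n ! i = g (ray_prefix \<xi> n) ! i"
    unfolding bdry_act_def ray_prefix_def[symmetric] using i by simp
qed

lemma bdry_act_in_boundary:
  assumes g: "g \<in> tree_aut d" and \<xi>: "\<xi> \<in> topspace (boundary d)"
  shows "bdry_act g \<xi> \<in> topspace (boundary d)"
proof -
  have "ray_prefix (bdry_act g \<xi>) (Suc i) \<in> tree_vertices d" for i
    using ray_prefix_bdry_act[OF assms] tree_aut_level[OF g ray_prefix_in_tree_level[OF \<xi>]]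
    by (simp add: tree_level_def)
  then show ?thesis unfolding topspace_boundary tree_vertices_def by simp (meson lessI)
qed

lemma openin_boundary_if_prefix_saturated:
  assumes A: "A \<subseteq> topspace (boundary d)"
    and saturated: "\<And>\<xi> \<eta>. \<xi> \<in> A \<Longrightarrow> \<eta> \<in> topspace (boundary d)
                      \<Longrightarrow> ray_prefix \<eta> N = ray_prefix \<xi> N \<Longrightarrow> \<eta> \<in> A"
  shows "openin (boundary d) A"
  unfolding boundary_def openin_product_topology_alt
proof
  fix \<xi> assume "\<xi> \<in> A"
  then have \<xi>: "\<forall>i. \<xi> i < d i" using A topspace_boundary by blast
  define U where "U i = (if i < N then {\<xi> i} else {..<d i})" for i
  have "finite {i \<in> UNIV. U i \<noteq> topspace (discrete_topology {..<d i})}"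
    by (rule finite_subset[of _ "{..<N}"]) (auto simp: U_def)
  moreover have "\<forall>i\<in>UNIV. openin (discrete_topology {..<d i}) (U i)" "\<xi> \<in> PiE UNIV U"
    using \<xi> by (simp_all add: U_def PiE_iff)
  moreover have "PiE UNIV U \<subseteq> A"
  proof
    fix \<eta> assume "\<eta> \<in> PiE UNIV U"
    then have \<eta>: "\<eta> i \<in> U i" for i by blast
    have "\<eta> i < d i" for i
      using \<eta>[of i] \<xi> by (simp add: U_def split: if_splits)
    moreover have "\<eta> i = \<xi> i" if "i < N" for i
      using \<eta>[of i] that by (simp add: U_def)
    then have "ray_prefix \<eta> N = ray_prefix \<xi> N"
      by (simp add: ray_prefix_eq_iff)
    ultimately show "\<eta> \<in> A"
      using saturated[OF \<open>\<xi> \<in> A\<close>] by (simp add: topspace_boundary)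
  qed
  ultimately show "\<exists>U. finite {i \<in> UNIV. U i \<noteq> topspace (discrete_topology {..<d i})}
      \<and> (\<forall>i\<in>UNIV. openin (discrete_topology {..<d i}) (U i)) \<and> \<xi> \<in> PiE UNIV U \<and> PiE UNIV U \<subseteq> A"
    by blast
qed

lemma boundary_open_contains_cylinder:
  assumes S: "openin (boundary d) S" and \<xi>: "\<xi> \<in> S"
  shows "\<exists>N. cylinder d (ray_prefix \<xi> N) \<subseteq> S"
proof -
  obtain U where U: "finite {i \<in> UNIV. U i \<noteq> topspace (discrete_topology {..<d i})}"
      "\<xi> \<in> PiE UNIV U" "PiE UNIV U \<subseteq> S"
    using S \<xi> unfolding boundary_def openin_product_topology_alt by blast
  obtain N where N: "\<And>i. U i \<noteq> {..<d i} \<Longrightarrow> i < N"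
    using U(1) finite_nat_set_iff_bounded by auto
  have "\<eta> \<in> S" if \<eta>: "\<eta> \<in> cylinder d (ray_prefix \<xi> N)" for \<eta>
  proof -
    have "\<eta> i \<in> U i" for i
    proof (cases "i < N")
      case True
      then have "\<eta> i = \<xi> i" using \<eta> by (simp add: cylinder_def ray_prefix_eq_iff)
      then show ?thesis using U(2) by auto
    next
      case False
      then have "U i = {..<d i}" using N by blast
      moreover have "\<eta> i < d i" using \<eta> by (simp add: cylinder_def topspace_boundary)
      ultimately show ?thesis by simp
    qed
    then show ?thesis using U(3) by blast
  qed
  then show ?thesis by blast
qed

lemma openin_boundary_minus_cylinder: "openin (boundary d) (topspace (boundary d) - cylinder d v)"
  by (rule openin_boundary_if_prefix_saturated[where N = "length v"]) (auto simp: cylinder_def)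

lemma Hausdorff_space_boundary: "Hausdorff_space (boundary d)"
  unfolding boundary_def Hausdorff_space_product_topology by simp

lemma (in tree_aut_group) bdry_act_rist_vertex:
  assumes r: "r \<in> rist_vertex d G v" and \<xi>: "\<xi> \<in> topspace (boundary d) - cylinder d v"
  shows "bdry_act r \<xi> = \<xi>"
proof
  fix n
  have "\<not> prefix v (ray_prefix \<xi> (Suc n))"
    using \<xi> by (cases "length v \<le> Suc n") (auto simp: prefix_iff_take cylinder_def min_def)
  then show "bdry_act r \<xi> n = \<xi> n"
    unfolding bdry_act_def ray_prefix_def[symmetric] using rist_vertex_fixes[OF r] by simp
qed

context weakly_branch_group
begin

lemma tree_level_nonempty: "tree_level d n \<noteq> {}"
proof -
  have "ray_through [] \<in> topspace (boundary d)"
    using ray_through_in_boundary[of "[]" d] branching_pos by (simp add: tree_vertices_def)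
  then show ?thesis using ray_prefix_in_tree_level by blast
qed

lemma boundary_minimal: "minimal_action G (boundary d) bdry_act"
  unfolding minimal_action_def
proof (intro conjI allI impI)
  show "topspace (boundary d) \<noteq> {}"
    using ray_through_in_boundary[of "[]" d] branching_pos by (auto simp: tree_vertices_def)
next
  fix Z assume "closedin (boundary d) Z \<and> Z \<noteq> {} \<and> (\<forall>g\<in>G. bdry_act g ` Z \<subseteq> Z)"
  then have closed: "closedin (boundary d) Z" and "Z \<noteq> {}"
    and invariant: "\<And>g \<zeta>. g \<in> G \<Longrightarrow> \<zeta> \<in> Z \<Longrightarrow> bdry_act g \<zeta> \<in> Z"
    by blast+
  then obtain \<zeta> where \<zeta>: "\<zeta> \<in> Z" by blast
  have Z_top: "Z \<subseteq> topspace (boundary d)" using closedin_subset[OF closed] .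
  show "Z = topspace (boundary d)"
  proof (rule ccontr)
    assume "Z \<noteq> topspace (boundary d)"
    then obtain \<xi> where \<xi>: "\<xi> \<in> topspace (boundary d) - Z" using Z_top by blast
    moreover have "openin (boundary d) (topspace (boundary d) - Z)"
      using closed by (simp add: closedin_def)
    ultimately obtain N where N: "cylinder d (ray_prefix \<xi> N) \<subseteq> topspace (boundary d) - Z"
      using boundary_open_contains_cylinder by blast
    have \<zeta>_top: "\<zeta> \<in> topspace (boundary d)" using \<zeta> Z_top by blast
    obtain g where g: "g \<in> G" "g (ray_prefix \<zeta> N) = ray_prefix \<xi> N"
      using level_transitive ray_prefix_in_tree_level \<zeta>_top \<xi> by blast
    have "bdry_act g \<zeta> \<in> cylinder d (ray_prefix \<xi> N)"
      using g ray_prefix_bdry_act[OF tree_aut_G[OF g(1)] \<zeta>_top]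
        bdry_act_in_boundary[OF tree_aut_G[OF g(1)] \<zeta>_top]
      by (simp add: cylinder_def)
    then show False using N invariant[OF g(1) \<zeta>] by blast
  qed
qed

lemma boundary_faithful: "faithful_action id G (boundary d) bdry_act"
  unfolding faithful_action_def
proof (intro ballI impI)
  fix g assume g: "g \<in> G" and trivial: "\<forall>\<xi>\<in>topspace (boundary d). bdry_act g \<xi> = \<xi>"
  have "g u = u" if u: "u \<in> tree_vertices d" for u
  proof -
    have \<xi>: "ray_through u \<in> topspace (boundary d)"
      using ray_through_in_boundary[OF u] branching_pos by blast
    have "g u = ray_prefix (bdry_act g (ray_through u)) (length u)"
      using ray_prefix_bdry_act[OF tree_aut_G[OF g] \<xi>] by simp
    then show ?thesis using trivial \<xi> by simp
  qed
  then show "g = id" using tree_aut_eq_idI tree_aut_G[OF g] by blast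
qed

end

section \<open>Hausdorff G-spaces and highly proximal extensions\<close>

lemma openin_moved_points:
  assumes "Hausdorff_space X" "continuous_map X X f"
  shows "openin X {x \<in> topspace X. f x \<noteq> x}"
proof -
  have "closedin X {x \<in> topspace X. f x = id x}"
    by (rule closedin_continuous_maps_eq[OF assms]) simp
  then have "openin X (topspace X - {x \<in> topspace X. f x = id x})"
    by (rule openin_diff[OF openin_topspace])
  moreover have "topspace X - {x \<in> topspace X. f x = id x} = {x \<in> topspace X. f x \<noteq> x}" by auto
  ultimately show ?thesis by simp
qed

lemma displaced_neighbourhood:
  assumes "Hausdorff_space X" "continuous_map X X f" "x \<in> topspace X" "f x \<noteq> x"
  shows "\<exists>W. openin X W \<and> x \<in> W \<and> (\<forall>y\<in>W. f y \<notin> W)"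
proof -
  have "f x \<in> topspace X" using continuous_map_image_subset_topspace[OF assms(2)] assms(3) by blast
  then have "\<exists>A B. openin X A \<and> openin X B \<and> x \<in> A \<and> f x \<in> B \<and> disjnt A B"
    using assms(1,3,4) unfolding Hausdorff_space_def by simp
  then obtain A B where AB: "openin X A" "openin X B" "x \<in> A" "f x \<in> B" "disjnt A B"
    by blast
  define W where "W = {y \<in> A. f y \<in> B}"
  have "openin X W"
    unfolding W_def by (rule openin_continuous_map_preimage_gen[OF assms(2) AB(1,2)])
  moreover have "f y \<notin> W" if "y \<in> W" for y
    using that AB(5) unfolding W_def disjnt_def by blast
  ultimately show ?thesis using AB(3,4) unfolding W_def by blast
qed

context
  fixes G :: "'g set" and Y :: "'a topology" and actY :: "'g \<Rightarrow> 'a \<Rightarrow> 'a"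
    and Z :: "'b topology" and actZ :: "'g \<Rightarrow> 'b \<Rightarrow> 'b" and \<pi> :: "'a \<Rightarrow> 'b"
  assumes hp: "highly_proximal_ext G Y actY Z actZ \<pi>"
begin

lemma highly_proximal_continuous: "continuous_map Y Z \<pi>"
  using hp by (simp add: highly_proximal_ext_def)

lemma highly_proximal_surj: "\<pi> ` topspace Y = topspace Z"
  using hp by (simp add: highly_proximal_ext_def)

lemma highly_proximal_equivariant: "g \<in> G \<Longrightarrow> y \<in> topspace Y \<Longrightarrow> \<pi> (actY g y) = actZ g (\<pi> y)"
  using hp by (simp add: highly_proximal_ext_def)

lemma highly_proximal_fibre:
  "openin Y U \<Longrightarrow> U \<noteq> {} \<Longrightarrow> \<exists>z\<in>topspace Z. {y \<in> topspace Y. \<pi> y = z} \<subseteq> U"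
  using hp by (simp add: highly_proximal_ext_def)

lemma highly_proximal_minimal:
  assumes "compact_space Y" "Hausdorff_space Z" "minimal_action G Z actZ"
  shows "minimal_action G Y actY"
  unfolding minimal_action_def
proof (intro conjI allI impI)
  have "topspace Z \<noteq> {}" using assms(3) unfolding minimal_action_def by blast
  then show "topspace Y \<noteq> {}" using highly_proximal_surj by (metis image_empty)
next
  fix C assume "closedin Y C \<and> C \<noteq> {} \<and> (\<forall>g\<in>G. actY g ` C \<subseteq> C)"
  then have closed: "closedin Y C" and "C \<noteq> {}" and invariant: "\<And>g. g \<in> G \<Longrightarrow> actY g ` C \<subseteq> C"
    by blast+
  have C_top: "C \<subseteq> topspace Y" using closedin_subset[OF closed] .
  have "compactin Y C" by (rule closedin_compact_space[OF assms(1) closed])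
  then have "compactin Z (\<pi> ` C)" by (rule image_compactin[OF _ highly_proximal_continuous])
  then have "closedin Z (\<pi> ` C)" by (rule compactin_imp_closedin[OF assms(2)])
  moreover have "actZ g ` \<pi> ` C \<subseteq> \<pi> ` C" if g: "g \<in> G" for g
  proof clarify
    fix y assume "y \<in> C"
    then have "actZ g (\<pi> y) = \<pi> (actY g y)" "actY g y \<in> C"
      using highly_proximal_equivariant[OF g] invariant[OF g] C_top by auto
    then show "actZ g (\<pi> y) \<in> \<pi> ` C" by blast
  qed
  moreover have "\<pi> ` C \<noteq> {}" using \<open>C \<noteq> {}\<close> by simp
  ultimately have image_full: "\<pi> ` C = topspace Z"
    using assms(3) unfolding minimal_action_def by metis
  show "C = topspace Y"
  proof (rule ccontr)
    assume "C \<noteq> topspace Y"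
    then have "openin Y (topspace Y - C)" "topspace Y - C \<noteq> {}"
      using openin_diff[OF openin_topspace closed] C_top by blast+
    then obtain z where z: "z \<in> topspace Z" "{y \<in> topspace Y. \<pi> y = z} \<subseteq> topspace Y - C"
      using highly_proximal_fibre by blast
    have "z \<in> \<pi> ` C" using z(1) image_full by simp
    then obtain c where "c \<in> C" "\<pi> c = z" by blast
    then show False using z(2) C_top by blast
  qed
qed

lemma highly_proximal_faithful:
  assumes "faithful_action e G Z actZ"
  shows "faithful_action e G Y actY"
  unfolding faithful_action_def
proof (intro ballI impI)
  fix g assume g: "g \<in> G" and trivial: "\<forall>y\<in>topspace Y. actY g y = y"
  have "actZ g z = z" if "z \<in> topspace Z" for z
  proof -
    have "z \<in> \<pi> ` topspace Y" using that by (simp add: highly_proximal_surj)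
    then obtain y where "y \<in> topspace Y" "z = \<pi> y" by blast
    then show ?thesis using highly_proximal_equivariant[OF g] trivial by simp
  qed
  then show "g = e" using assms g unfolding faithful_action_def by blast
qed

text \<open>Otherwise g displaces a neighbourhood of y; by high proximality this neighbourhood contains
  a whole fibre over V, which g maps to itself.\<close>

lemma highly_proximal_fixes_preimage:
  assumes "Hausdorff_space Y" "continuous_map Y Y (actY g)" "g \<in> G"
    and V: "openin Z V" "\<And>z. z \<in> V \<Longrightarrow> actZ g z = z"
    and y: "y \<in> topspace Y" "\<pi> y \<in> V"
  shows "actY g y = y"
proof (rule ccontr)
  assume "actY g y \<noteq> y"
  then obtain W where W: "openin Y W" "y \<in> W" "\<And>y'. y' \<in> W \<Longrightarrow> actY g y' \<notin> W"
    using displaced_neighbourhood[OF assms(1,2) y(1)] by blast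
  define A where "A = {y' \<in> W. \<pi> y' \<in> V}"
  have "openin Y A"
    unfolding A_def by (rule openin_continuous_map_preimage_gen[OF highly_proximal_continuous W(1) V(1)])
  moreover have "A \<noteq> {}" using W(2) y(2) unfolding A_def by blast
  ultimately obtain z where z: "z \<in> topspace Z" "{y' \<in> topspace Y. \<pi> y' = z} \<subseteq> A"
    using highly_proximal_fibre by blast
  then have "z \<in> \<pi> ` topspace Y" by (simp add: highly_proximal_surj)
  then obtain y' where y': "y' \<in> topspace Y" "\<pi> y' = z" by blast
  then have "y' \<in> W" "z \<in> V" using z(2) unfolding A_def by blast+
  have "actY g y' \<in> topspace Y" using continuous_map_image_subset_topspace[OF assms(2)] y'(1) by blast
  moreover have "\<pi> (actY g y') = z"
    using highly_proximal_equivariant[OF assms(3) y'(1)] y'(2) V(2)[OF \<open>z \<in> V\<close>] by simp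
  ultimately have "actY g y' \<in> W" using z(2) unfolding A_def by blast
  then show False using W(3)[OF \<open>y' \<in> W\<close>] by blast
qed

end

section \<open>Micro-supported actions of groups of bijections\<close>

locale bij_group_space = bij_group G for G :: "('b \<Rightarrow> 'b) set" +
  fixes X :: "'a topology" and act :: "('b \<Rightarrow> 'b) \<Rightarrow> 'a \<Rightarrow> 'a"
  assumes G_space: "G_space (\<circ>) id G X act" and Hausdorff: "Hausdorff_space X"
begin

lemma act_continuous: "g \<in> G \<Longrightarrow> continuous_map X X (act g)"
  using G_space unfolding G_space_def by blast

lemma act_in_topspace: "g \<in> G \<Longrightarrow> x \<in> topspace X \<Longrightarrow> act g x \<in> topspace X"
  using continuous_map_image_subset_topspace[OF act_continuous] by blast

lemma act_id: "x \<in> topspace X \<Longrightarrow> act id x = x"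
  using G_space unfolding G_space_def by blast

lemma act_comp: "g \<in> G \<Longrightarrow> h \<in> G \<Longrightarrow> x \<in> topspace X \<Longrightarrow> act (g \<circ> h) x = act g (act h x)"
  using G_space unfolding G_space_def by blast

lemma act_inv_left [simp]: "g \<in> G \<Longrightarrow> x \<in> topspace X \<Longrightarrow> act (inv g) (act g x) = x"
  using act_comp[OF inv_in_G] act_id by (metis inv_comp_left)

lemma act_inv_right [simp]: "g \<in> G \<Longrightarrow> x \<in> topspace X \<Longrightarrow> act g (act (inv g) x) = x"
  using act_comp[OF _ inv_in_G] act_id by (metis inv_comp_right)

lemma inj_on_act: "g \<in> G \<Longrightarrow> inj_on (act g) (topspace X)"
  by (metis act_inv_left inj_onI)

lemma rist_in_G: "k \<in> rist G X act U \<Longrightarrow> k \<in> G"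
  by (simp add: rist_def)

lemma rist_fixes: "k \<in> rist G X act U \<Longrightarrow> x \<in> topspace X \<Longrightarrow> x \<notin> U \<Longrightarrow> act k x = x"
  by (simp add: rist_def)

lemma id_in_rist: "id \<in> rist G X act U"
  by (simp add: rist_def id_in_G act_id)

lemma rist_comp:
  "k \<in> rist G X act U \<Longrightarrow> l \<in> rist G X act U \<Longrightarrow> k \<circ> l \<in> rist G X act U"
  by (simp add: rist_def comp_in_G act_comp)

lemma rist_inv:
  assumes k: "k \<in> rist G X act U"
  shows "inv k \<in> rist G X act U"
proof -
  have "act (inv k) x = x" if "x \<in> topspace X" "x \<notin> U" for x
    using act_inv_left[OF rist_in_G[OF k] that(1)] rist_fixes[OF k that] by simp
  then show ?thesis using inv_in_G[OF rist_in_G[OF k]] by (simp add: rist_def)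
qed

lemma rist_mono: "U \<subseteq> U' \<Longrightarrow> rist G X act U \<subseteq> rist G X act U'"
  unfolding rist_def by blast

lemma rist_maps_into:
  assumes k: "k \<in> rist G X act U" and x: "x \<in> topspace X" "x \<in> U"
  shows "act k x \<in> U"
  using inj_on_fixing_outside_maps_into[OF inj_on_act[OF rist_in_G[OF k]] _ _ x]
    act_in_topspace[OF rist_in_G[OF k]] rist_fixes[OF k] by blast

text \<open>inv g moves act a y out of W, where inv a acts trivially.\<close>

lemma act_commutator_displaced:
  assumes g: "g \<in> G" and displaced: "\<And>y. y \<in> W \<Longrightarrow> act g y \<notin> W"
    and a: "a \<in> rist G X act W" and y: "y \<in> topspace X" "y \<in> W"
  shows "act (g \<circ> inv a \<circ> inv g \<circ> a) y = act a y"
proof -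
  have aG: "a \<in> G" using rist_in_G[OF a] .
  define y' where "y' = act (inv g) (act a y)"
  have y'_top: "y' \<in> topspace X" unfolding y'_def by (simp add: act_in_topspace g aG inv_in_G y(1))
  have "act g y' \<in> W" unfolding y'_def using rist_maps_into[OF a y] act_in_topspace[OF aG y(1)] g by simp
  then have "y' \<notin> W" using displaced by blast
  then have "act (inv a) y' = y'" using rist_fixes[OF rist_inv[OF a] y'_top] by simp
  then show ?thesis
    using y'_top unfolding y'_def
    by (simp add: act_comp act_in_topspace comp_in_G inv_in_G g aG y(1))
qed

lemma minimal_open_invariant:
  assumes "minimal_action G X act" "openin X U" "U \<noteq> {}"
    and invariant: "\<And>g x. g \<in> G \<Longrightarrow> x \<in> U \<Longrightarrow> act g x \<in> U"
  shows "U = topspace X"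
proof -
  have U_top: "U \<subseteq> topspace X" using openin_subset[OF assms(2)] .
  have "act g ` (topspace X - U) \<subseteq> topspace X - U" if g: "g \<in> G" for g
  proof
    fix y assume "y \<in> act g ` (topspace X - U)"
    then obtain x where x: "x \<in> topspace X" "x \<notin> U" "y = act g x" by blast
    then have "act (inv g) y = x" using g by simp
    then have "y \<notin> U" using invariant[OF inv_in_G[OF g]] x(2) by blast
    then show "y \<in> topspace X - U" using act_in_topspace[OF g x(1)] x(3) by simp
  qed
  moreover have "closedin X (topspace X - U)" using assms(2) by blast
  ultimately have "topspace X - U = {}"
    using assms(1,3) U_top unfolding minimal_action_def by blast
  then show ?thesis using U_top by blast
qed

end

locale faithful_micro_space = bij_group_space +
  assumes faithful: "faithful_action id G X act"
    and micro: "micro_supported id G X act"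
begin

lemma act_eq_imp_eq:
  assumes "g \<in> G" "h \<in> G" "\<And>x. x \<in> topspace X \<Longrightarrow> act g x = act h x"
  shows "g = h"
proof -
  have "act (inv h \<circ> g) x = x" if "x \<in> topspace X" for x
    using assms that by (simp add: act_comp inv_in_G)
  then have "inv h \<circ> g = id"
    using faithful comp_in_G[OF inv_in_G[OF assms(2)] assms(1)] unfolding faithful_action_def by blast
  then have "h \<circ> (inv h \<circ> g) = h" by simp
  then show "g = h" using assms(2) by (simp flip: comp_assoc)
qed

lemma rist_nontrivial: "openin X U \<Longrightarrow> U \<noteq> {} \<Longrightarrow> \<exists>k\<in>rist G X act U. k \<noteq> id"
  using micro id_in_rist unfolding micro_supported_def by blast

lemma rist_moves_point:
  assumes "k \<in> rist G X act U" "k \<noteq> id"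
  obtains x where "x \<in> topspace X" "x \<in> U" "act k x \<noteq> x"
  using faithful rist_in_G[OF assms(1)] rist_fixes[OF assms(1)] assms(2)
  unfolding faithful_action_def by blast

lemma open_split:
  assumes "openin X W" "W \<noteq> {}"
  obtains W1 W2 where "openin X W1" "openin X W2" "W1 \<noteq> {}" "W2 \<noteq> {}"
    "W1 \<subseteq> W" "W2 \<subseteq> W" "W1 \<inter> W2 = {}"
proof -
  obtain k where k: "k \<in> rist G X act W" "k \<noteq> id" using rist_nontrivial[OF assms] by blast
  then obtain x where x: "x \<in> topspace X" "x \<in> W" "act k x \<noteq> x" by (rule rist_moves_point)
  have "act k x \<in> topspace X" "act k x \<in> W"
    using act_in_topspace[OF rist_in_G[OF k(1)] x(1)] rist_maps_into[OF k(1) x(1,2)] by simp_all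
  then have "\<exists>A B. openin X A \<and> openin X B \<and> x \<in> A \<and> act k x \<in> B \<and> disjnt A B"
    using Hausdorff x unfolding Hausdorff_space_def by simp
  then obtain A B where AB: "openin X A" "openin X B" "x \<in> A" "act k x \<in> B" "disjnt A B"
    by blast
  show thesis
  proof
    show "openin X (W \<inter> A)" "openin X (W \<inter> B)" using AB(1,2) assms(1) by blast+
    show "W \<inter> A \<noteq> {}" "W \<inter> B \<noteq> {}" using AB(3,4) x(2) \<open>act k x \<in> W\<close> by blast+
    show "(W \<inter> A) \<inter> (W \<inter> B) = {}" using AB(5) unfolding disjnt_def by blast
  qed blast+
qed

lemma rist_psubset:
  assumes "openin X W" "W \<noteq> {}"
  obtains W' where "openin X W'" "W' \<noteq> {}" "rist G X act W' \<subset> rist G X act W"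
proof -
  obtain W1 W2 where W: "openin X W1" "openin X W2" "W1 \<noteq> {}" "W2 \<noteq> {}"
      "W1 \<subseteq> W" "W2 \<subseteq> W" "W1 \<inter> W2 = {}"
    using open_split[OF assms] by blast
  obtain b where b: "b \<in> rist G X act W2" "b \<noteq> id" using rist_nontrivial[OF W(2,4)] by blast
  have "b \<notin> rist G X act W1"
  proof
    assume "b \<in> rist G X act W1"
    then have "act b x = x" if "x \<in> topspace X" for x
      using rist_fixes[OF b(1) that] rist_fixes[of b W1, OF _ that] W(7) by blast
    then show False using act_eq_imp_eq[OF rist_in_G[OF b(1)] id_in_G] act_id b(2) by simp
  qed
  moreover have "b \<in> rist G X act W" using rist_mono[OF W(6)] b(1) by blast
  ultimately have "rist G X act W1 \<subset> rist G X act W" using rist_mono[OF W(5)] by blast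
  then show thesis using that W(1,3) by blast
qed

lemma rist_infinite: "openin X W \<Longrightarrow> W \<noteq> {} \<Longrightarrow> infinite (rist G X act W)"
proof (induction "card (rist G X act W)" arbitrary: W rule: less_induct)
  case less
  obtain W' where W': "openin X W'" "W' \<noteq> {}" "rist G X act W' \<subset> rist G X act W"
    using rist_psubset[OF less.prems] by blast
  show ?case
  proof
    assume finite: "finite (rist G X act W)"
    then have "card (rist G X act W') < card (rist G X act W)" using psubset_card_mono W'(3) by blast
    then have "infinite (rist G X act W')" using less.hyps W'(1,2) by blast
    then show False using finite finite_subset W'(3) by blast
  qed
qed

context
  fixes L
  assumes finite_L: "finite L" and G_L: "\<And>g. g \<in> G \<Longrightarrow> g ` L \<subseteq> L"
begin

lemma rist_nontrivial_fixing:
  assumes W: "openin X W" "W \<noteq> {}"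
  obtains q where "q \<in> rist G X act W" "q \<noteq> id" "\<And>u. u \<in> L \<Longrightarrow> q u = u"
proof -
  define R where "R = rist G X act W"
  have "(\<lambda>k. restrict k L) ` R \<subseteq> PiE L (\<lambda>_. L)"
    using G_L rist_in_G unfolding R_def by fastforce
  then have "finite ((\<lambda>k. restrict k L) ` R)"
    using finite_subset finite_PiE[OF finite_L finite_L] by blast
  then have "\<not> inj_on (\<lambda>k. restrict k L) R"
    using rist_infinite[OF W] finite_imageD unfolding R_def by blast
  then obtain k0 k1 where k: "k0 \<in> R" "k1 \<in> R" "restrict k1 L = restrict k0 L" "k1 \<noteq> k0"
    unfolding inj_on_def by metis
  have k_G: "k0 \<in> G" "k1 \<in> G" using k(1,2) rist_in_G unfolding R_def by blast+
  show thesis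
  proof
    show "k1 \<circ> inv k0 \<in> rist G X act W"
      using rist_comp[OF _ rist_inv] k(1,2) unfolding R_def by blast
    show "k1 \<circ> inv k0 \<noteq> id"
    proof
      assume "k1 \<circ> inv k0 = id"
      then have "k1 \<circ> inv k0 \<circ> k0 = k0" by simp
      then show False using k(4) k_G(1) by (simp add: comp_assoc)
    qed
    show "(k1 \<circ> inv k0) u = u" if "u \<in> L" for u
    proof -
      have "inv k0 u \<in> L" using G_L[OF inv_in_G[OF k_G(1)]] that by blast
      then have "k1 (inv k0 u) = k0 (inv k0 u)" using fun_cong[OF k(3), of "inv k0 u"] by simp
      then show ?thesis using k_G(1) by simp
    qed
  qed
qed

lemma rist_noncommuting_fixing:
  assumes W: "openin X W" "W \<noteq> {}"
  obtains a b where "a \<in> rist G X act W" "b \<in> rist G X act W"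
    "\<And>u. u \<in> L \<Longrightarrow> a u = u" "\<And>u. u \<in> L \<Longrightarrow> b u = u" "a \<circ> b \<noteq> b \<circ> a"
proof -
  obtain a where a: "a \<in> rist G X act W" "a \<noteq> id" "\<And>u. u \<in> L \<Longrightarrow> a u = u"
    using rist_nontrivial_fixing[OF W] by blast
  have a_G: "a \<in> G" using rist_in_G[OF a(1)] .
  obtain x where x: "x \<in> topspace X" "x \<in> W" "act a x \<noteq> x"
    using rist_moves_point[OF a(1,2)] by blast
  obtain W' where W': "openin X W'" "x \<in> W'" "\<And>y. y \<in> W' \<Longrightarrow> act a y \<notin> W'"
    using displaced_neighbourhood[OF Hausdorff act_continuous[OF a_G] x(1,3)] by blast
  have W_W': "openin X (W \<inter> W')" "W \<inter> W' \<noteq> {}" using W(1) W'(1,2) x(2) by blast+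
  obtain b where b: "b \<in> rist G X act (W \<inter> W')" "b \<noteq> id" "\<And>u. u \<in> L \<Longrightarrow> b u = u"
    using rist_nontrivial_fixing[OF W_W'] by blast
  have b_G: "b \<in> G" using rist_in_G[OF b(1)] .
  obtain z where z: "z \<in> topspace X" "z \<in> W \<inter> W'" "act b z \<noteq> z"
    using rist_moves_point[OF b(1,2)] by blast
  have "a \<circ> b \<noteq> b \<circ> a"
  proof
    assume commute: "a \<circ> b = b \<circ> a"
    define y where "y = act (inv a) z"
    have y: "y \<in> topspace X" "act a y = z"
      unfolding y_def using z(1) a_G by (simp_all add: act_in_topspace inv_in_G)
    then have "y \<notin> W \<inter> W'" using W'(3) z(2) by blast
    then have "act b y = y" using rist_fixes[OF b(1) y(1)] by blast
    then have "act b z = act (b \<circ> a) y" using act_comp[OF b_G a_G y(1)] y(2) by simp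
    also have "\<dots> = z" using commute act_comp[OF a_G b_G y(1)] \<open>act b y = y\<close> y(2) by simp
    finally show False using z(3) by simp
  qed
  then show thesis
    using that a(1,3) b(3) rist_mono[of "W \<inter> W'" W] b(1) by blast
qed

end

lemma rist_commute_if_agree:
  assumes a: "a \<in> rist G X act W" and b: "b \<in> rist G X act W"
    and c: "c \<in> G" and e: "e \<in> G" and commute: "c \<circ> e = e \<circ> c"
    and c_a: "\<And>y. y \<in> topspace X \<Longrightarrow> y \<in> W \<Longrightarrow> act c y = act a y"
    and e_b: "\<And>y. y \<in> topspace X \<Longrightarrow> y \<in> W \<Longrightarrow> act e y = act b y"
  shows "a \<circ> b = b \<circ> a"
proof -
  have a_G: "a \<in> G" and b_G: "b \<in> G" using rist_in_G a b by blast+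
  have "act a (act b x) = act b (act a x)" if x: "x \<in> topspace X" for x
  proof (cases "x \<in> W")
    case True
    have "act a (act b x) = act c (act e x)"
      using c_a e_b x True act_in_topspace[OF b_G x] rist_maps_into[OF b x True] by simp
    also have "\<dots> = act e (act c x)"
      using act_comp[OF c e x] act_comp[OF e c x] commute by simp
    also have "\<dots> = act b (act a x)"
      using c_a e_b x True act_in_topspace[OF a_G x] rist_maps_into[OF a x True] by simp
    finally show ?thesis .
  next
    case False
    then show ?thesis using rist_fixes[OF a x] rist_fixes[OF b x] by simp
  qed
  then show ?thesis
    using act_eq_imp_eq[OF comp_in_G[OF a_G b_G] comp_in_G[OF b_G a_G]] act_comp a_G b_G by simp
qed

end

section \<open>Weakly branch groups acting on compact spaces\<close>

locale branch_space = weakly_branch_group d G + bij_group_space G X act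
  for d G and X :: "'a topology" and act +
  assumes compact: "compact_space X"
begin

definition rist_support :: "nat list \<Rightarrow> 'a set" where
  "rist_support v = {x \<in> topspace X. \<exists>r\<in>rist_vertex d G v. act r x \<noteq> x}"

lemma rist_support_subset: "rist_support v \<subseteq> topspace X"
  unfolding rist_support_def by blast

lemma openin_rist_support: "openin X (rist_support v)"
proof -
  have "rist_support v = (\<Union>r\<in>rist_vertex d G v. {x \<in> topspace X. act r x \<noteq> x})"
    unfolding rist_support_def by blast
  moreover have "openin X {x \<in> topspace X. act r x \<noteq> x}" if "r \<in> rist_vertex d G v" for r
    using openin_moved_points[OF Hausdorff act_continuous[OF rist_vertex_in_G[OF that]]] .
  ultimately show ?thesis by auto
qed

lemma rist_support_mono: "prefix v u \<Longrightarrow> rist_support u \<subseteq> rist_support v"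
  using rist_vertex_mono unfolding rist_support_def by blast

lemma act_rist_support:
  assumes g: "g \<in> G" and v: "v \<in> tree_vertices d" and x: "x \<in> rist_support v"
  shows "act g x \<in> rist_support (g v)"
proof -
  obtain r where r: "r \<in> rist_vertex d G v" "act r x \<noteq> x" and x_top: "x \<in> topspace X"
    using x unfolding rist_support_def by blast
  have r_G: "r \<in> G" using rist_vertex_in_G[OF r(1)] .
  have "act (g \<circ> r \<circ> inv g) (act g x) = act g (act r x)"
    using x_top g r_G by (simp add: act_comp act_in_topspace comp_in_G inv_in_G)
  moreover have "act g (act r x) \<noteq> act g x"
    using inj_onD[OF inj_on_act[OF g] _ act_in_topspace[OF r_G x_top] x_top] r(2) by blast
  ultimately show ?thesis
    using rist_vertex_conj[OF g r(1) v] act_in_topspace[OF g x_top] unfolding rist_support_def by force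
qed

text \<open>A fibre inside U lies over some ray z; a cylinder around z misses the compact image of the
  complement of U, and a non-trivial element of the rigid stabiliser of its vertex fixes the open
  complement of the cylinder, hence by high proximality the whole complement of U.\<close>

lemma highly_proximal_micro_supported:
  assumes hp: "highly_proximal_ext G X act (boundary d) bdry_act \<pi>"
  shows "micro_supported id G X act"
  unfolding micro_supported_def
proof (intro allI impI)
  fix U assume "openin X U \<and> U \<noteq> {}"
  then obtain z where z: "z \<in> topspace (boundary d)" "{x \<in> topspace X. \<pi> x = z} \<subseteq> U"
    using highly_proximal_fibre[OF hp] by blast
  define K where "K = \<pi> ` (topspace X - U)"
  have "compactin X (topspace X - U)"
    using closedin_compact_space[OF compact] \<open>openin X U \<and> U \<noteq> {}\<close> by blast
  then have "closedin (boundary d) K"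
    unfolding K_def
    using compactin_imp_closedin[OF Hausdorff_space_boundary] image_compactin
      highly_proximal_continuous[OF hp] by blast
  then have "openin (boundary d) (topspace (boundary d) - K)"
    by (rule openin_diff[OF openin_topspace])
  moreover have "z \<notin> K" using z(2) unfolding K_def by blast
  ultimately obtain N where N: "cylinder d (ray_prefix z N) \<subseteq> topspace (boundary d) - K"
    using boundary_open_contains_cylinder z(1) by blast
  define v where "v = ray_prefix z N"
  have "v \<in> tree_vertices d" using ray_prefix_in_tree_level[OF z(1)] by (simp add: v_def tree_level_def)
  then obtain r where r: "r \<in> rist_vertex d G v" "r \<noteq> id" using rist_vertex_nontrivial by blast
  have "act r x = x" if x: "x \<in> topspace X" "x \<notin> U" for x
  proof (rule highly_proximal_fixes_preimage[OF hp Hausdorff act_continuous])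
    show "openin (boundary d) (topspace (boundary d) - cylinder d v)"
      by (rule openin_boundary_minus_cylinder)
    show "bdry_act r \<zeta> = \<zeta>" if "\<zeta> \<in> topspace (boundary d) - cylinder d v" for \<zeta>
      using bdry_act_rist_vertex[OF r(1) that] .
    have "\<pi> x \<in> K" using x unfolding K_def by blast
    moreover have "\<pi> x \<in> topspace (boundary d)"
      using highly_proximal_continuous[OF hp] x(1) continuous_map_image_subset_topspace by blast
    ultimately show "\<pi> x \<in> topspace (boundary d) - cylinder d v"
      using N unfolding v_def by blast
  qed (use x rist_vertex_in_G[OF r(1)] in simp_all)
  then have "r \<in> rist G X act U" using rist_vertex_in_G[OF r(1)] unfolding rist_def by blast
  then show "rist G X act U \<noteq> {id}" using r(2) by blast
qed

end

locale micro_branch_space = branch_space d G X act + faithful_micro_space G X act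
  for d G X act +
  assumes minimal: "minimal_action G X act"
begin

lemma rist_support_nonempty:
  assumes "v \<in> tree_vertices d"
  shows "rist_support v \<noteq> {}"
proof -
  obtain r where r: "r \<in> rist_vertex d G v" "r \<noteq> id" using rist_vertex_nontrivial[OF assms] by blast
  then obtain x where "x \<in> topspace X" "act r x \<noteq> x"
    using faithful rist_vertex_in_G[OF r(1)] unfolding faithful_action_def by blast
  then show ?thesis using r(1) unfolding rist_support_def by blast
qed

text \<open>If some x were moved both by g fixing everything off v and by h fixing everything off w, take
  non-commuting a, b supported on a neighbourhood W of x displaced by g and h and fixing the level
  of v and w. The commutators of g with a and of h with b lie in the commuting groups
  rist_vertex d G v and rist_vertex d G w, and act on W like a and b; so a and b would commute.\<close>

lemma rist_support_disjoint:
  assumes v: "v \<in> tree_level d n" and w: "w \<in> tree_level d n" and "v \<noteq> w"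
  shows "rist_support v \<inter> rist_support w = {}"
proof (rule ccontr)
  assume "rist_support v \<inter> rist_support w \<noteq> {}"
  then obtain x g h where x: "x \<in> topspace X"
    and g: "g \<in> rist_vertex d G v" "act g x \<noteq> x" and h: "h \<in> rist_vertex d G w" "act h x \<noteq> x"
    unfolding rist_support_def by blast
  have g_G: "g \<in> G" and h_G: "h \<in> G" using g(1) h(1) rist_vertex_in_G by blast+
  obtain Wg where Wg: "openin X Wg" "x \<in> Wg" "\<And>y. y \<in> Wg \<Longrightarrow> act g y \<notin> Wg"
    using displaced_neighbourhood[OF Hausdorff act_continuous[OF g_G] x g(2)] by blast
  obtain Wh where Wh: "openin X Wh" "x \<in> Wh" "\<And>y. y \<in> Wh \<Longrightarrow> act h y \<notin> Wh"
    using displaced_neighbourhood[OF Hausdorff act_continuous[OF h_G] x h(2)] by blast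
  define W where "W = Wg \<inter> Wh"
  have W: "openin X W" "W \<noteq> {}" using Wg(1,2) Wh(1,2) unfolding W_def by blast+
  have g_W: "act g y \<notin> W" and h_W: "act h y \<notin> W" if "y \<in> W" for y
    using that Wg(3) Wh(3) unfolding W_def by blast+
  have level_invariant: "\<And>f. f \<in> G \<Longrightarrow> f ` tree_level d n \<subseteq> tree_level d n"
    using G_maps_level by blast
  obtain a b where ab: "a \<in> rist G X act W" "b \<in> rist G X act W"
      "\<And>u. u \<in> tree_level d n \<Longrightarrow> a u = u" "\<And>u. u \<in> tree_level d n \<Longrightarrow> b u = u" "a \<circ> b \<noteq> b \<circ> a"
    using rist_noncommuting_fixing[of "tree_level d n", OF finite_tree_level level_invariant W] by blast
  have vw: "v \<in> tree_vertices d" "w \<in> tree_vertices d" "length v = length w"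
    using v w by (simp_all add: tree_level_def)
  have c: "g \<circ> inv a \<circ> inv g \<circ> a \<in> rist_vertex d G v"
    using rist_vertex_commutator[OF g(1) vw(1) rist_in_G[OF ab(1)] ab(3)[OF v]] .
  have e: "h \<circ> inv b \<circ> inv h \<circ> b \<in> rist_vertex d G w"
    using rist_vertex_commutator[OF h(1) vw(2) rist_in_G[OF ab(2)] ab(4)[OF w]] .
  have "a \<circ> b = b \<circ> a"
  proof (rule rist_commute_if_agree[OF ab(1,2) rist_vertex_in_G[OF c] rist_vertex_in_G[OF e]])
    show "(g \<circ> inv a \<circ> inv g \<circ> a) \<circ> (h \<circ> inv b \<circ> inv h \<circ> b)
        = (h \<circ> inv b \<circ> inv h \<circ> b) \<circ> (g \<circ> inv a \<circ> inv g \<circ> a)"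
      using rist_vertex_commute[OF vw(3) \<open>v \<noteq> w\<close> c e] .
    show "act (g \<circ> inv a \<circ> inv g \<circ> a) y = act a y" if "y \<in> topspace X" "y \<in> W" for y
      using act_commutator_displaced[OF g_G g_W ab(1) that] .
    show "act (h \<circ> inv b \<circ> inv h \<circ> b) y = act b y" if "y \<in> topspace X" "y \<in> W" for y
      using act_commutator_displaced[OF h_G h_W ab(2) that] .
  qed
  then show False using ab(5) by blast
qed

lemma rist_support_cover:
  assumes "x \<in> topspace X"
  obtains v where "v \<in> tree_level d n" "x \<in> rist_support v"
proof -
  have "(\<Union>v\<in>tree_level d n. rist_support v) = topspace X"
  proof (rule minimal_open_invariant[OF minimal])
    show "openin X (\<Union>v\<in>tree_level d n. rist_support v)"
      using openin_rist_support by blast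
    obtain v where v: "v \<in> tree_level d n" using tree_level_nonempty by blast
    then have "rist_support v \<noteq> {}" using rist_support_nonempty by (simp add: tree_level_def)
    then show "(\<Union>v\<in>tree_level d n. rist_support v) \<noteq> {}" using v by blast
    show "act g y \<in> (\<Union>v\<in>tree_level d n. rist_support v)"
      if "g \<in> G" "y \<in> (\<Union>v\<in>tree_level d n. rist_support v)" for g y
      using that act_rist_support G_maps_level by (fastforce simp: tree_level_def)
  qed
  then show thesis using that assms by blast
qed

lemma closedin_rist_support:
  assumes "v \<in> tree_vertices d"
  shows "closedin X (rist_support v)"
proof -
  define n where "n = length v"
  have v: "v \<in> tree_level d n" using assms by (simp add: tree_level_def n_def)
  have "rist_support v = topspace X - (\<Union>w\<in>tree_level d n - {v}. rist_support w)"
  proof (intro equalityI subsetI)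
    fix x assume "x \<in> rist_support v"
    moreover have "x \<notin> rist_support w" if "w \<in> tree_level d n - {v}" for w
      using rist_support_disjoint[OF v, of w] that \<open>x \<in> rist_support v\<close> by blast
    ultimately show "x \<in> topspace X - (\<Union>w\<in>tree_level d n - {v}. rist_support w)"
      using rist_support_subset by blast
  next
    fix x assume x: "x \<in> topspace X - (\<Union>w\<in>tree_level d n - {v}. rist_support w)"
    then obtain w where w: "w \<in> tree_level d n" "x \<in> rist_support w"
      using rist_support_cover[of x n] by blast
    then have "w = v" using x by blast
    then show "x \<in> rist_support v" using w(2) by simp
  qed
  moreover have "openin X (\<Union>w\<in>tree_level d n - {v}. rist_support w)"
    using openin_rist_support by blast
  ultimately show ?thesis using closedin_diff[OF closedin_topspace] by simp
qed

definition level_vertex :: "'a \<Rightarrow> nat \<Rightarrow> nat list" where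
  "level_vertex x n = (THE v. v \<in> tree_level d n \<and> x \<in> rist_support v)"

definition boundary_map :: "'a \<Rightarrow> nat \<Rightarrow> nat" where
  "boundary_map x i = level_vertex x (Suc i) ! i"

lemma level_vertex_eqI: "v \<in> tree_level d n \<Longrightarrow> x \<in> rist_support v \<Longrightarrow> level_vertex x n = v"
  unfolding level_vertex_def using rist_support_disjoint by blast

lemma level_vertex:
  assumes "x \<in> topspace X"
  shows "level_vertex x n \<in> tree_level d n" "x \<in> rist_support (level_vertex x n)"
proof -
  obtain v where "v \<in> tree_level d n" "x \<in> rist_support v" using rist_support_cover[OF assms] .
  then show "level_vertex x n \<in> tree_level d n" "x \<in> rist_support (level_vertex x n)"
    using level_vertex_eqI by simp_all
qed

lemma take_level_vertex:
  assumes x: "x \<in> topspace X" and "m \<le> n"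
  shows "take m (level_vertex x n) = level_vertex x m"
proof (rule level_vertex_eqI[symmetric])
  have v: "level_vertex x n \<in> tree_level d n" using level_vertex(1)[OF x] .
  then show "take m (level_vertex x n) \<in> tree_level d m"
    using tree_vertices_take \<open>m \<le> n\<close> by (simp add: tree_level_def)
  have "prefix (take m (level_vertex x n)) (level_vertex x n)" by (rule take_is_prefix)
  then show "x \<in> rist_support (take m (level_vertex x n))"
    using rist_support_mono level_vertex(2)[OF x] by blast
qed

lemma ray_prefix_boundary_map:
  assumes x: "x \<in> topspace X"
  shows "ray_prefix (boundary_map x) n = level_vertex x n"
proof (rule nth_equalityI)
  show "length (ray_prefix (boundary_map x) n) = length (level_vertex x n)"
    using level_vertex(1)[OF x] by (simp add: tree_level_def)
next
  fix i assume "i < length (ray_prefix (boundary_map x) n)"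
  then have "Suc i \<le> n" by simp
  then have "boundary_map x i = level_vertex x n ! i"
    using take_level_vertex[OF x] unfolding boundary_map_def by (metis lessI nth_take)
  then show "ray_prefix (boundary_map x) n ! i = level_vertex x n ! i"
    using \<open>Suc i \<le> n\<close> by simp
qed

lemma boundary_map_in_boundary:
  assumes x: "x \<in> topspace X"
  shows "boundary_map x \<in> topspace (boundary d)"
proof -
  have "boundary_map x i < d i" for i
    using level_vertex(1)[OF x, of "Suc i"] unfolding boundary_map_def tree_level_def tree_vertices_def
    by simp
  then show ?thesis by (simp add: topspace_boundary)
qed

lemma continuous_map_boundary_map: "continuous_map X (boundary d) boundary_map"
  unfolding boundary_def continuous_map_componentwise_UNIV
proof
  fix k
  show "continuous_map X (discrete_topology {..<d k}) (\<lambda>x. boundary_map x k)"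
    unfolding continuous_map_def
  proof (intro conjI allI impI Pi_I)
    fix x assume "x \<in> topspace X"
    then show "boundary_map x k \<in> topspace (discrete_topology {..<d k})"
      using boundary_map_in_boundary by (simp add: topspace_boundary)
  next
    fix U
    have "{x \<in> topspace X. boundary_map x k \<in> U}
        = (\<Union>v\<in>{v \<in> tree_level d (Suc k). v ! k \<in> U}. rist_support v)"
    proof (intro equalityI subsetI)
      fix x assume "x \<in> {x \<in> topspace X. boundary_map x k \<in> U}"
      then show "x \<in> (\<Union>v\<in>{v \<in> tree_level d (Suc k). v ! k \<in> U}. rist_support v)"
        using level_vertex unfolding boundary_map_def by blast
    next
      fix x assume "x \<in> (\<Union>v\<in>{v \<in> tree_level d (Suc k). v ! k \<in> U}. rist_support v)"
      then obtain v where "v \<in> tree_level d (Suc k)" "v ! k \<in> U" "x \<in> rist_support v" by blast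
      then show "x \<in> {x \<in> topspace X. boundary_map x k \<in> U}"
        using level_vertex_eqI rist_support_subset unfolding boundary_map_def by blast
    qed
    moreover have "openin X (\<Union>v\<in>{v \<in> tree_level d (Suc k). v ! k \<in> U}. rist_support v)"
      using openin_rist_support by blast
    ultimately show "openin X {x \<in> topspace X. boundary_map x k \<in> U}" by simp
  qed
qed

lemma boundary_map_equivariant:
  assumes g: "g \<in> G" and x: "x \<in> topspace X"
  shows "boundary_map (act g x) = bdry_act g (boundary_map x)"
proof (rule ray_eqI)
  fix n
  have "act g x \<in> rist_support (g (level_vertex x n))"
    using act_rist_support[OF g] level_vertex[OF x] by (simp add: tree_level_def)
  then have "level_vertex (act g x) n = g (level_vertex x n)"
    using level_vertex_eqI G_maps_level[OF g level_vertex(1)[OF x]] by blast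
  then show "ray_prefix (boundary_map (act g x)) n = ray_prefix (bdry_act g (boundary_map x)) n"
    using ray_prefix_boundary_map act_in_topspace[OF g x] x
      ray_prefix_bdry_act[OF tree_aut_G[OF g] boundary_map_in_boundary[OF x]] by simp
qed

text \<open>A ray lifts to a point of the intersection of the nested closed sets
  rist_support (ray_prefix \<xi> n), which is non-empty by compactness.\<close>

lemma boundary_map_surj: "boundary_map ` topspace X = topspace (boundary d)"
proof (intro equalityI subsetI)
  fix \<xi> assume \<xi>: "\<xi> \<in> topspace (boundary d)"
  define C where "C n = rist_support (ray_prefix \<xi> n)" for n
  have "(\<Inter>n. C n) \<noteq> {}"
  proof (rule compact_space_imp_nest[OF compact])
    have "ray_prefix \<xi> n \<in> tree_vertices d" for n
      using ray_prefix_in_tree_level[OF \<xi>] by (simp add: tree_level_def)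
    then show "closedin X (C n)" "C n \<noteq> {}" for n
      unfolding C_def using closedin_rist_support rist_support_nonempty by blast+
    have "prefix (ray_prefix \<xi> n) (ray_prefix \<xi> (Suc n))" for n
      by (simp add: prefix_iff_take)
    then show "decseq C" unfolding decseq_Suc_iff C_def using rist_support_mono by blast
  qed
  then obtain x where x: "\<And>n. x \<in> rist_support (ray_prefix \<xi> n)" unfolding C_def by blast
  then have x_top: "x \<in> topspace X" using rist_support_subset by blast
  have "boundary_map x = \<xi>"
  proof (rule ray_eqI)
    fix n show "ray_prefix (boundary_map x) n = ray_prefix \<xi> n"
      using ray_prefix_boundary_map[OF x_top] level_vertex_eqI[OF ray_prefix_in_tree_level[OF \<xi>] x]
      by simp
  qed
  then show "\<xi> \<in> boundary_map ` topspace X" using x_top by blast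
qed (use boundary_map_in_boundary in blast)

text \<open>A non-trivial element k of the rigid stabiliser of U moves some vertex u; then the support of
  u lies in U (a point outside U is fixed by k, yet k maps the support of u to the disjoint support
  of k u), and the whole fibre over the ray through u lies in the support of u.\<close>

lemma boundary_map_fibre:
  assumes U: "openin X U" "U \<noteq> {}"
  shows "\<exists>\<xi>\<in>topspace (boundary d). {x \<in> topspace X. boundary_map x = \<xi>} \<subseteq> U"
proof -
  obtain k where k: "k \<in> rist G X act U" "k \<noteq> id" using rist_nontrivial[OF U] by blast
  have k_G: "k \<in> G" using rist_in_G[OF k(1)] .
  obtain u where u: "u \<in> tree_vertices d" "k u \<noteq> u"
    using tree_aut_eq_idI[OF tree_aut_G[OF k_G]] k(2) by blast
  define n where "n = length u"
  have u_level: "u \<in> tree_level d n" "k u \<in> tree_level d n"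
    using u(1) G_maps_level[OF k_G] by (simp_all add: tree_level_def n_def)
  have support_in_U: "rist_support u \<subseteq> U"
  proof
    fix x assume x: "x \<in> rist_support u"
    have x_top: "x \<in> topspace X" using x rist_support_subset by blast
    show "x \<in> U"
    proof (rule ccontr)
      assume "x \<notin> U"
      then have "act k x = x" using rist_fixes[OF k(1) x_top] by simp
      moreover have "act k x \<in> rist_support (k u)" using act_rist_support[OF k_G u(1) x] .
      ultimately have "x \<in> rist_support (k u)" by simp
      moreover have "rist_support u \<inter> rist_support (k u) = {}"
        using rist_support_disjoint[OF u_level(1,2)] u(2) by metis
      ultimately show False using x by blast
    qed
  qed
  have "ray_through u \<in> topspace (boundary d)"
    using ray_through_in_boundary[OF u(1)] branching_pos by blast
  moreover have "{x \<in> topspace X. boundary_map x = ray_through u} \<subseteq> rist_support u"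
  proof clarify
    fix x assume x: "x \<in> topspace X" "boundary_map x = ray_through u"
    then have "level_vertex x n = u" using ray_prefix_boundary_map[OF x(1), of n] by (simp add: n_def)
    then show "x \<in> rist_support u" using level_vertex(2)[OF x(1), of n] by simp
  qed
  ultimately show ?thesis using support_in_U by blast
qed

lemma boundary_map_highly_proximal: "highly_proximal_ext G X act (boundary d) bdry_act boundary_map"
  unfolding highly_proximal_ext_def
  using continuous_map_boundary_map boundary_map_surj boundary_map_equivariant boundary_map_fibre
  by blast

end

theorem corollary5p35:
  fixes d :: "nat \<Rightarrow> nat"
    and G :: "(nat list \<Rightarrow> nat list) set"
    and X :: "'a topology"
    and act :: "(nat list \<Rightarrow> nat list) \<Rightarrow> 'a \<Rightarrow> 'a"
  assumes "weakly_branch d G"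
    and "G_space (\<circ>) id G X act"
    and "compact_space X" and "Hausdorff_space X"
  shows "(minimal_action G X act \<and> faithful_action id G X act \<and> micro_supported id G X act)
     \<longleftrightarrow> (\<exists>\<pi>. highly_proximal_ext G X act (boundary d) bdry_act \<pi>)"
proof -
  interpret weakly_branch_group d G
    using assms(1) by unfold_locales
  interpret branch_space d G X act
    using assms(2-4) by unfold_locales (simp_all add: id_in_G comp_in_G inv_in_G bij_G)
  show ?thesis
  proof
    assume "minimal_action G X act \<and> faithful_action id G X act \<and> micro_supported id G X act"
    then interpret micro_branch_space d G X act
      by unfold_locales blast+
    show "\<exists>\<pi>. highly_proximal_ext G X act (boundary d) bdry_act \<pi>"
      using boundary_map_highly_proximal by blast
  next
    assume "\<exists>\<pi>. highly_proximal_ext G X act (boundary d) bdry_act \<pi>"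
    then obtain \<pi> where hp: "highly_proximal_ext G X act (boundary d) bdry_act \<pi>" ..
    show "minimal_action G X act \<and> faithful_action id G X act \<and> micro_supported id G X act"
      using highly_proximal_minimal[OF hp compact Hausdorff_space_boundary boundary_minimal]
        highly_proximal_faithful[OF hp boundary_faithful] highly_proximal_micro_supported[OF hp]
      by blast
  qed
qed

end
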